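(* For every positive integer $n$, the map $\Psi_{\mathrm{PF}\to\mathrm{Luk}}$ restricts to a bijection $\mathrm{UPF}_n^{\mathrm{inc}}\to\mathrm{Motz}_n^{\le 1}$. Moreover, $|\mathrm{UPF}_n^{\mathrm{inc}}|=|\mathrm{Motz}_n^{\le 1}|=2^{n-1}$.
   Context: Let $[n]=\{1,\dots,n\}$. A parking preference is $p=(p_1,\dots,p_n)\in[n]^n$; cars $1,\dots,n$ enter in order and car $i$ parks in the first unoccupied spot $k\ge p_i$ among spots $1,\dots,n$, failing if there is none. $p$ is a parking function if all cars park. If car $i$ parks in spot $o_i$, its displacement is $d_i=o_i-p_i$. A parking function is unit-interval if $\max_i d_i\le 1$. $\mathrm{UPF}_n^{\mathrm{inc}}$ is the set of unit-interval parking functions with $p_1\le\dots\le p_n$. A Łukasiewicz word of length $n$ is a sequence $\ell=(\ell_1,\dots,\ell_n)$ of integers $\ell_i\ge-1$ with $h(\ell;k):=\sum_{i=1}^k\ell_i\ge0$ for all $k\in[n]$ and $h(\ell;n)=0$ (viewed as the lattice path from $(0,0)$ with steps $(\ell_i+1,\ell_i)$). It is a Motzkin path if all $\ell_i\le 1$. $\mathrm{Motz}_n^{\le1}$ is the set of Motzkin paths of length $n$ of height at most one, i.e. with $h(\ell;k)\le 1$ for all $k$. $\Psi_{\mathrm{PF}\to\mathrm{Luk}}(p)=(\ell_1,\dots,\ell_n)$ with $\ell_i=|\{k\in[n]: p_k=i\}|-1$. *)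

theory Defs
  imports Main
begin

(* Parking preferences and outcomes are lists of length n; entry i (0-based list
   index) corresponds to car i+1.  Spots are 1..n. *)

definition pref_set :: "nat \<Rightarrow> nat list set" where
  "pref_set n = {p. length p = n \<and> (\<forall>x\<in>set p. 1 \<le> x \<and> x \<le> n)}"

fun park :: "nat \<Rightarrow> nat set \<Rightarrow> nat list \<Rightarrow> nat list option" where
  "park n occ [] = Some []"
| "park n occ (a # ps) =
     (if \<exists>k. a \<le> k \<and> k \<le> n \<and> k \<notin> occ
      then (let s = (LEAST k. a \<le> k \<and> k \<le> n \<and> k \<notin> occ) in
              map_option (\<lambda>os. s # os) (park n (insert s occ) ps))
      else None)"

definition outcome :: "nat \<Rightarrow> nat list \<Rightarrow> nat list option" where
  "outcome n p = park n {} p"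

definition is_parking_function :: "nat \<Rightarrow> nat list \<Rightarrow> bool" where
  "is_parking_function n p \<longleftrightarrow> p \<in> pref_set n \<and> outcome n p \<noteq> None"

definition is_unit_interval_pf :: "nat \<Rightarrow> nat list \<Rightarrow> bool" where
  "is_unit_interval_pf n p \<longleftrightarrow> is_parking_function n p \<and>
     (\<forall>i<n. the (outcome n p) ! i - p ! i \<le> 1)"

definition UPF_inc :: "nat \<Rightarrow> nat list set" where
  "UPF_inc n = {p. is_unit_interval_pf n p \<and> sorted p}"

definition height :: "int list \<Rightarrow> nat \<Rightarrow> int" where
  "height l k = sum_list (take k l)"

definition is_luk_word :: "nat \<Rightarrow> int list \<Rightarrow> bool" where
  "is_luk_word n l \<longleftrightarrow> length l = n \<and> (\<forall>x\<in>set l. x \<ge> -1) \<and>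
     (\<forall>k\<in>{1..n}. height l k \<ge> 0) \<and> height l n = 0"

definition is_motzkin :: "nat \<Rightarrow> int list \<Rightarrow> bool" where
  "is_motzkin n l \<longleftrightarrow> is_luk_word n l \<and> (\<forall>x\<in>set l. x \<le> 1)"

definition Motz_le1 :: "nat \<Rightarrow> int list set" where
  "Motz_le1 n = {l. is_motzkin n l \<and> (\<forall>k\<in>{1..n}. height l k \<le> 1)}"

definition Psi_PF_Luk :: "nat \<Rightarrow> nat list \<Rightarrow> int list" where
  "Psi_PF_Luk n p = map (\<lambda>i. int (card {k. k < n \<and> p ! k = i}) - 1) [1..<n+1]"

end

theory Submission
  imports Defs
begin

(* A weakly increasing parking function parks car i in spot i, so it is unit-interval exactly
   when p_i \<in> {i - 1, i} for every i (with p_1 = 1).  Such a p is determined by the set S of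
   cars with p_i = i - 1, an arbitrary subset of {2..n}.  Under \<Psi> the spot i is preferred by
   car i unless i \<in> S and by car i + 1 if i + 1 \<in> S, so \<ell>_i = [i + 1 \<in> S] - [i \<in> S] and the
   path has height [k + 1 \<in> S] after k steps: the Motzkin paths of height at most one are
   exactly these, one for each S.  Both sets are thus in bijection with the subsets of an
   (n - 1)-element set, compatibly with \<Psi>. *)

lemma park_SomeD:
  "park n occ q = Some os \<Longrightarrow> length os = length q \<and> distinct os \<and> set os \<inter> occ = {}
     \<and> (\<forall>j<length q. q!j \<le> os!j \<and> os!j \<le> n)"
proof (induction q arbitrary: occ os)
  case Nil
  then show ?case by simp
next
  case (Cons a ps)
  define s where "s = (LEAST k. a \<le> k \<and> k \<le> n \<and> k \<notin> occ)"
  have ex: "\<exists>k. a \<le> k \<and> k \<le> n \<and> k \<notin> occ"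
    using Cons.prems by (auto split: if_splits)
  have s: "a \<le> s \<and> s \<le> n \<and> s \<notin> occ" unfolding s_def using ex by (rule LeastI_ex)
  obtain os' where os': "park n (insert s occ) ps = Some os'" and os: "os = s # os'"
    using Cons.prems ex by (auto simp: Let_def s_def[symmetric])
  note IH = Cons.IH[OF os']
  show ?case
  proof (intro conjI allI impI)
    fix j assume "j < length (a # ps)"
    then show "(a # ps) ! j \<le> os ! j" "os ! j \<le> n" using IH s os by (cases j; auto)+
  qed (use IH s os in auto)
qed

lemma sorted_parking_function_nth_le:
  assumes "is_parking_function n p" "sorted p" "k < n"
  shows "p!k \<le> Suc k"
proof (rule ccontr)
  assume "\<not> p!k \<le> Suc k"
  obtain os where os: "park n {} p = Some os"
    using assms(1) by (auto simp: is_parking_function_def outcome_def)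
  have len: "length p = n"
    using assms(1) by (simp add: is_parking_function_def pref_set_def)
  note park = park_SomeD[OF os]
  \<comment> \<open>cars k, ..., n - 1 would all have to park in the n - k - 1 spots k + 2, ..., n\<close>
  have "nth os ` {k..<n} \<subseteq> {k+2..n}"
  proof
    fix y assume "y \<in> nth os ` {k..<n}"
    then obtain j where j: "k \<le> j" "j < n" "y = os!j" by auto
    have "p!k \<le> p!j" using assms(2) j len by (simp add: sorted_iff_nth_mono)
    with \<open>\<not> p!k \<le> Suc k\<close> show "y \<in> {k+2..n}" using park j len by auto
  qed
  moreover have "inj_on (nth os) {k..<n}"
    using park len by (intro inj_on_nth) auto
  ultimately have "card {k..<n} \<le> card {k+2..n}"
    by (metis card_image card_mono finite_atLeastAtMost)
  then show False using assms(3) by simp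
qed

lemma park_consecutive:
  "m + length q \<le> n \<Longrightarrow> (\<forall>j<length q. 1 \<le> q!j \<and> q!j \<le> m + j + 1) \<Longrightarrow>
     park n {1..m} q = Some [m+1..<m+1+length q]"
proof (induction q arbitrary: m)
  case Nil
  then show ?case by simp
next
  case (Cons a ps)
  have a: "1 \<le> a" "a \<le> m + 1" using Cons.prems(2) by (auto dest: spec[of _ 0])
  have ex: "\<exists>k. a \<le> k \<and> k \<le> n \<and> k \<notin> {1..m}"
    using a Cons.prems(1) by (intro exI[of _ "m+1"]) auto
  have least: "(LEAST k. a \<le> k \<and> k \<le> n \<and> k \<notin> {1..m}) = m + 1"
    by (rule Least_equality) (use a Cons.prems(1) in auto)
  have "park n {1..Suc m} ps = Some [Suc m+1..<Suc m+1+length ps]"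
    using Cons.prems by (intro Cons.IH) (auto dest: spec[of _ "Suc _"])
  moreover have "insert (m+1) {1..m} = {1..Suc m}" by auto
  moreover have "[m+1..<m+1+length (a#ps)] = (m+1) # [Suc m+1..<Suc m+1+length ps]"
    by (simp add: upt_conv_Cons del: upt_Suc)
  ultimately show ?case using ex least by (simp add: Let_def)
qed

lemma outcome_eq_upt:
  assumes "length p = n" "\<forall>k<n. 1 \<le> p!k \<and> p!k \<le> Suc k"
  shows "outcome n p = Some [1..<Suc n]"
  using park_consecutive[of 0 p n] assms by (simp add: outcome_def)

lemma mem_UPF_inc_iff:
  "p \<in> UPF_inc n \<longleftrightarrow> length p = n \<and> (\<forall>k<n. p!k = Suc k \<or> (0 < k \<and> p!k = k))"
proof
  assume p: "p \<in> UPF_inc n"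
  then have len: "length p = n" and pos: "\<forall>k<n. 1 \<le> p!k"
    by (auto simp: UPF_inc_def is_unit_interval_pf_def is_parking_function_def pref_set_def)
  have le: "\<forall>k<n. p!k \<le> Suc k"
    using p sorted_parking_function_nth_le by (auto simp: UPF_inc_def is_unit_interval_pf_def)
  have "outcome n p = Some [1..<Suc n]"
    using outcome_eq_upt len pos le by blast
  then have disp: "\<forall>k<n. Suc k - p!k \<le> 1"
    using p by (auto simp: UPF_inc_def is_unit_interval_pf_def simp del: upt_Suc)
  have "\<forall>k<n. p!k = Suc k \<or> (0 < k \<and> p!k = k)"
  proof (intro allI impI)
    fix k assume "k < n"
    then have "1 \<le> p!k" "p!k \<le> Suc k" "Suc k - p!k \<le> 1" using pos le disp by auto
    then show "p!k = Suc k \<or> (0 < k \<and> p!k = k)" by linarith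
  qed
  with len show "length p = n \<and> (\<forall>k<n. p!k = Suc k \<or> (0 < k \<and> p!k = k))" ..
next
  assume "length p = n \<and> (\<forall>k<n. p!k = Suc k \<or> (0 < k \<and> p!k = k))"
  then have len: "length p = n" and p: "\<forall>k<n. p!k = Suc k \<or> (0 < k \<and> p!k = k)"
    by auto
  have oc: "outcome n p = Some [1..<Suc n]"
    using p by (intro outcome_eq_upt len) fastforce
  have "p \<in> pref_set n" using p len by (fastforce simp: pref_set_def set_conv_nth)
  moreover have "sorted p"
    unfolding sorted_iff_nth_mono
  proof (intro allI impI)
    fix i j assume "i \<le> j" "j < length p"
    then show "p!i \<le> p!j" using p[rule_format, of i] p[rule_format, of j] len
      by (cases "i = j") auto
  qed
  moreover have "\<forall>i<n. the (outcome n p) ! i - p ! i \<le> 1"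
    using oc p by (auto simp del: upt_Suc)
  ultimately show "p \<in> UPF_inc n"
    using oc by (auto simp: UPF_inc_def is_unit_interval_pf_def is_parking_function_def)
qed

(* The set S \<subseteq> {1..<n} records the (0-based) cars parked one spot after their preference;
   equivalently, the numbers of steps after which the Motzkin path is at height one. *)

definition upf_of_set :: "nat \<Rightarrow> nat set \<Rightarrow> nat list" where
  "upf_of_set n S = map (\<lambda>k. if k \<in> S then k else Suc k) [0..<n]"

lemma length_upf_of_set [simp]: "length (upf_of_set n S) = n"
  by (simp add: upf_of_set_def)

lemma nth_upf_of_set [simp]: "k < n \<Longrightarrow> upf_of_set n S ! k = (if k \<in> S then k else Suc k)"
  by (simp add: upf_of_set_def)

definition diffs :: "(nat \<Rightarrow> int) \<Rightarrow> nat \<Rightarrow> int list" where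
  "diffs t n = map (\<lambda>i. t (Suc i) - t i) [0..<n]"

definition motz_of_set :: "nat \<Rightarrow> nat set \<Rightarrow> int list" where
  "motz_of_set n S = diffs (\<lambda>k. of_bool (k \<in> S)) n"

lemma UPF_inc_eq_image: "UPF_inc n = upf_of_set n ` Pow {1..<n}"
proof (intro equalityI subsetI)
  fix p assume "p \<in> UPF_inc n"
  then have len: "length p = n" and p: "\<forall>k<n. p!k = Suc k \<or> (0 < k \<and> p!k = k)"
    by (auto simp: mem_UPF_inc_iff)
  have "p = upf_of_set n {k \<in> {1..<n}. p!k = k}"
    using p len by (intro nth_equalityI) auto
  then show "p \<in> upf_of_set n ` Pow {1..<n}" by blast
next
  fix p assume "p \<in> upf_of_set n ` Pow {1..<n}"
  then show "p \<in> UPF_inc n"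
    by (auto simp: mem_UPF_inc_iff split: if_splits)
qed

lemma inj_on_upf_of_set: "inj_on (upf_of_set n) (Pow {..<n})"
proof (rule inj_onI)
  fix S T assume "S \<in> Pow {..<n}" "T \<in> Pow {..<n}" "upf_of_set n S = upf_of_set n T"
  then have "k \<in> S \<longleftrightarrow> k \<in> T" if "k < n" for k
    using that by (metis nth_upf_of_set n_not_Suc_n)
  then show "S = T" using \<open>S \<in> Pow {..<n}\<close> \<open>T \<in> Pow {..<n}\<close> by auto
qed

lemma bij_betw_upf_of_set: "bij_betw (upf_of_set n) (Pow {1..<n}) (UPF_inc n)"
proof -
  have "inj_on (upf_of_set n) (Pow {1..<n})"
    by (rule inj_on_subset[OF inj_on_upf_of_set]) auto
  then show ?thesis by (simp add: bij_betw_def UPF_inc_eq_image)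
qed

lemma height_diffs: "k \<le> n \<Longrightarrow> height (diffs t n) k = t k - t 0"
proof (induction k)
  case 0
  then show ?case by (simp add: height_def)
next
  case (Suc k)
  then have "take (Suc k) (diffs t n) = take k (diffs t n) @ [t (Suc k) - t k]"
    by (simp add: take_Suc_conv_app_nth diffs_def)
  with Suc show ?case by (simp add: height_def)
qed

lemma diffs_height: "diffs (height l) (length l) = l"
proof (rule nth_equalityI)
  fix i assume "i < length (diffs (height l) (length l))"
  then have "take (Suc i) l = take i l @ [l ! i]"
    by (simp add: take_Suc_conv_app_nth diffs_def)
  then show "diffs (height l) (length l) ! i = l ! i"
    using \<open>i < _\<close> by (simp add: diffs_def height_def)
qed (simp add: diffs_def)

lemma height_motz_of_set:
  "k \<le> n \<Longrightarrow> 0 \<notin> S \<Longrightarrow> height (motz_of_set n S) k = of_bool (k \<in> S)"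
  by (simp add: motz_of_set_def height_diffs)

lemma Motz_le1_eq_image: "Motz_le1 n = motz_of_set n ` Pow {1..<n}"
proof (intro equalityI subsetI)
  fix l assume l: "l \<in> Motz_le1 n"
  then have len: "length l = n" and hn: "height l n = 0"
    and h01: "\<forall>k\<in>{1..n}. 0 \<le> height l k \<and> height l k \<le> 1"
    by (auto simp: Motz_le1_def is_motzkin_def is_luk_word_def)
  define S where "S = {k \<in> {1..<n}. height l k = 1}"
  have "height l k = of_bool (k \<in> S)" if "k \<le> n" for k
  proof (cases "k = 0 \<or> k = n")
    case True
    then show ?thesis using hn by (auto simp: S_def height_def)
  next
    case False
    then have "0 \<le> height l k" "height l k \<le> 1" using h01 that by auto
    then show ?thesis using False that by (auto simp: S_def)
  qed
  then have "diffs (height l) n = motz_of_set n S"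
    by (simp add: motz_of_set_def diffs_def)
  then have "l = motz_of_set n S"
    using diffs_height[of l] len by simp
  then show "l \<in> motz_of_set n ` Pow {1..<n}" by (auto simp: S_def)
next
  fix l assume "l \<in> motz_of_set n ` Pow {1..<n}"
  then obtain S where S: "S \<subseteq> {1..<n}" and l: "l = motz_of_set n S" by auto
  then have "0 \<notin> S" by auto
  then have h: "height l k = of_bool (k \<in> S)" if "k \<le> n" for k
    using that l by (simp add: height_motz_of_set)
  have "set l \<subseteq> {-1..1}"
    using l by (auto simp: motz_of_set_def diffs_def)
  moreover have "length l = n"
    using l by (simp add: motz_of_set_def diffs_def)
  ultimately show "l \<in> Motz_le1 n"
    using h S by (auto simp: Motz_le1_def is_motzkin_def is_luk_word_def)
qed

lemma inj_on_motz_of_set: "inj_on (motz_of_set n) (Pow {1..n})"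
proof (rule inj_onI)
  fix S T assume "S \<in> Pow {1..n}" "T \<in> Pow {1..n}" "motz_of_set n S = motz_of_set n T"
  then have "k \<in> S \<longleftrightarrow> k \<in> T" if "k \<le> n" for k
    using height_motz_of_set[OF that, of S] height_motz_of_set[OF that, of T]
    by (metis PowD atLeastAtMost_iff not_one_le_zero of_bool_eq_iff subsetD)
  then show "S = T" using \<open>S \<in> Pow {1..n}\<close> \<open>T \<in> Pow {1..n}\<close> by auto
qed

lemma bij_betw_motz_of_set: "bij_betw (motz_of_set n) (Pow {1..<n}) (Motz_le1 n)"
proof -
  have "inj_on (motz_of_set n) (Pow {1..<n})"
    by (rule inj_on_subset[OF inj_on_motz_of_set]) auto
  then show ?thesis by (simp add: bij_betw_def Motz_le1_eq_image)
qed

lemma Psi_PF_Luk_upf_of_set: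
  assumes "S \<subseteq> {..<n}"
  shows "Psi_PF_Luk n (upf_of_set n S) = motz_of_set n S"
proof (rule nth_equalityI)
  fix i assume "i < length (Psi_PF_Luk n (upf_of_set n S))"
  then have i: "i < n" by (simp add: Psi_PF_Luk_def del: upt_Suc)
  have "{k. k < n \<and> upf_of_set n S ! k = Suc i}
      = (if i \<in> S then {} else {i}) \<union> (if Suc i \<in> S then {Suc i} else {})"
    using i assms by (auto split: if_splits)
  then show "Psi_PF_Luk n (upf_of_set n S) ! i = motz_of_set n S ! i"
    using i by (simp add: Psi_PF_Luk_def motz_of_set_def diffs_def del: upt_Suc)
qed (simp add: Psi_PF_Luk_def motz_of_set_def diffs_def del: upt_Suc)

theorem theorem3p2:
  fixes n :: nat
  assumes "n \<ge> 1"
  shows "bij_betw (Psi_PF_Luk n) (UPF_inc n) (Motz_le1 n)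
         \<and> card (UPF_inc n) = 2 ^ (n - 1)
         \<and> card (Motz_le1 n) = 2 ^ (n - 1)"
proof -
  have "bij_betw (Psi_PF_Luk n \<circ> upf_of_set n) (Pow {1..<n}) (Motz_le1 n)"
    using bij_betw_motz_of_set by (rule bij_betw_cong[THEN iffD2, rotated])
      (auto intro!: Psi_PF_Luk_upf_of_set)
  then have "bij_betw (Psi_PF_Luk n) (UPF_inc n) (Motz_le1 n)"
    using bij_betw_comp_iff[OF bij_betw_upf_of_set] by blast
  moreover have "card (Pow {1..<n}) = 2 ^ (n - 1)"
    by (simp add: card_Pow)
  ultimately show ?thesis
    using bij_betw_same_card[OF bij_betw_upf_of_set] bij_betw_same_card[OF bij_betw_motz_of_set]
    by simp
qed

end
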